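(* Let $n,R,k_0,K,d$ be positive integers. For each round $r\in\{1,\dots,R\}$ let $\ell_r:\{1,\dots,n\}\to\{0,\dots,k_0-1\}$ be a labeling and let $\mathbf{w}^{(r)}\in\mathbb{R}^d_{\ge 0}$ with $\|\mathbf{w}^{(r)}\|_1=1$. Let $\mathcal{C}_1,\dots,\mathcal{C}_K$ be a partition of $\{1,\dots,n\}$ into nonempty sets. For a cluster $\mathcal{C}_j$, round $r$ and label $t\in\{0,\dots,k_0-1\}$ define $$F_j(r,t)=\frac{1}{|\mathcal{C}_j|}\sum_{i\in\mathcal{C}_j}\mathbb{I}\{\ell_r(i)=t\},\qquad \mathrm{DFI}_j(r,t)=\max\Big\{0,\;F_j(r,t)-\max_{k\ne j}F_k(r,t)\Big\},$$ and $c_{j,r}=\sum_{t=0}^{k_0-1}\mathrm{DFI}_j(r,t)$. Let $\varepsilon>0$ be a constant with $\varepsilon\le 1/|\mathcal{C}_j|$ for every $j$. For an instance $i\in\mathcal{C}_j$ define $$c_i[r]=\frac{\mathrm{DFI}_j(r,\ell_r(i))}{\max\{\varepsilon,\,F_j(r,\ell_r(i))\}},\qquad \mathbf{w}^{\mathrm{raw}}_i=\sum_{r=1}^R c_i[r]\,\mathbf{w}^{(r)}.$$ For a nonzero vector $\mathbf{v}$ let $L_1(\mathbf{v})=\mathbf{v}/\|\mathbf{v}\|_1$, and define $\mathbf{W}_{\mathrm{cluster}}(\mathcal{C}_j)=L_1\big(\sum_{r=1}^R c_{j,r}\mathbf{w}^{(r)}\big)$. Then for every $j\in\{1,\dots,K\}$,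 $$\frac{1}{|\mathcal{C}_j|}\sum_{i\in\mathcal{C}_j}\mathbf{w}^{\mathrm{raw}}_i=\sum_{r=1}^R c_{j,r}\,\mathbf{w}^{(r)},$$ and consequently, whenever this vector is nonzero, $$L_1\Big(\frac{1}{|\mathcal{C}_j|}\sum_{i\in\mathcal{C}_j}\mathbf{w}^{\mathrm{raw}}_i\Big)=\mathbf{W}_{\mathrm{cluster}}(\mathcal{C}_j).$$
   Context: Setting: $n$ instances are clustered in $R$ "rounds", each round $r$ producing base labels $\ell_r(i)\in\{0,\dots,k_0-1\}$ and carrying a nonnegative feature-weight vector $\mathbf{w}^{(r)}$ over $d$ features; a final clustering $\mathcal{C}_1,\dots,\mathcal{C}_K$ is given. $F_j(r,t)$ is the cluster-bit frequency, $\mathrm{DFI}_j(r,t)$ the Discriminative FreqItem score, $c_{j,r}$ the round credit of cluster $j$, $\mathbf{w}^{\mathrm{raw}}_i$ the raw instance-level feature weights, and $\mathbf{W}_{\mathrm{cluster}}$ the cluster-level feature weights. The $\max_{k\ne j}$ is over $k\in\{1,\dots,K\}\setminus\{j\}$ (taken as $0$ if $K=1$). *)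

theory Defs
  imports "HOL-Analysis.Analysis"
begin

text \<open>Instances are 1..n, rounds 1..R, labels 0..k0-1, features 1..d, clusters 1..K.
  Vectors in R^d are represented as functions nat => real on the features 1..d.\<close>

definition freq :: "(nat \<Rightarrow> nat set) \<Rightarrow> (nat \<Rightarrow> nat \<Rightarrow> nat) \<Rightarrow> nat \<Rightarrow> nat \<Rightarrow> nat \<Rightarrow> real" where
  "freq C lab j r t = (\<Sum>i\<in>C j. if lab r i = t then 1 else 0) / real (card (C j))"

definition max_other :: "nat \<Rightarrow> (nat \<Rightarrow> nat set) \<Rightarrow> (nat \<Rightarrow> nat \<Rightarrow> nat) \<Rightarrow> nat \<Rightarrow> nat \<Rightarrow> nat \<Rightarrow> real" where
  "max_other K C lab j r t =
     (if {1..K} - {j} = {} then 0 else Max ((\<lambda>k. freq C lab k r t) ` ({1..K} - {j})))"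

definition DFI :: "nat \<Rightarrow> (nat \<Rightarrow> nat set) \<Rightarrow> (nat \<Rightarrow> nat \<Rightarrow> nat) \<Rightarrow> nat \<Rightarrow> nat \<Rightarrow> nat \<Rightarrow> real" where
  "DFI K C lab j r t = max 0 (freq C lab j r t - max_other K C lab j r t)"

definition round_credit :: "nat \<Rightarrow> nat \<Rightarrow> (nat \<Rightarrow> nat set) \<Rightarrow> (nat \<Rightarrow> nat \<Rightarrow> nat) \<Rightarrow> nat \<Rightarrow> nat \<Rightarrow> real" where
  "round_credit k0 K C lab j r = (\<Sum>t<k0. DFI K C lab j r t)"

definition inst_credit :: "real \<Rightarrow> nat \<Rightarrow> (nat \<Rightarrow> nat set) \<Rightarrow> (nat \<Rightarrow> nat \<Rightarrow> nat) \<Rightarrow> nat \<Rightarrow> nat \<Rightarrow> nat \<Rightarrow> real" where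
  "inst_credit eps K C lab j i r =
     DFI K C lab j r (lab r i) / max eps (freq C lab j r (lab r i))"

definition w_raw :: "real \<Rightarrow> nat \<Rightarrow> nat \<Rightarrow> (nat \<Rightarrow> nat set) \<Rightarrow> (nat \<Rightarrow> nat \<Rightarrow> nat) \<Rightarrow> (nat \<Rightarrow> nat \<Rightarrow> real) \<Rightarrow> nat \<Rightarrow> nat \<Rightarrow> nat \<Rightarrow> real" where
  "w_raw eps R K C lab w j i f = (\<Sum>r=1..R. inst_credit eps K C lab j i r * w r f)"

definition l1norm :: "nat \<Rightarrow> (nat \<Rightarrow> real) \<Rightarrow> real" where
  "l1norm d v = (\<Sum>f=1..d. \<bar>v f\<bar>)"

definition L1 :: "nat \<Rightarrow> (nat \<Rightarrow> real) \<Rightarrow> nat \<Rightarrow> real" where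
  "L1 d v = (\<lambda>f. v f / l1norm d v)"

definition W_cluster :: "nat \<Rightarrow> nat \<Rightarrow> nat \<Rightarrow> nat \<Rightarrow> (nat \<Rightarrow> nat set) \<Rightarrow> (nat \<Rightarrow> nat \<Rightarrow> nat) \<Rightarrow> (nat \<Rightarrow> nat \<Rightarrow> real) \<Rightarrow> nat \<Rightarrow> nat \<Rightarrow> real" where
  "W_cluster d R k0 K C lab w j = L1 d (\<lambda>f. \<Sum>r=1..R. round_credit k0 K C lab j r * w r f)"

end

theory Submission
  imports Defs
begin

text \<open>If label t occurs in cluster j in round r, then F_j(r,t) \<ge> 1/|C_j| \<ge> \<epsilon>, so every instance
  carrying t receives the credit DFI_j(r,t)/F_j(r,t). The |C_j| F_j(r,t) such instances thus
  contribute exactly |C_j| DFI_j(r,t), and summing over the labels gives |C_j| c_{j,r}; labels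
  absent from C_j contribute nothing on either side, since there DFI_j(r,t) = 0. Averaging the raw
  weights over C_j therefore yields the credit-weighted round weights, and L1-normalising both
  sides gives the cluster weights.\<close>

lemma freq_eq_card:
  assumes "finite (C j)"
  shows "freq C lab j r t = real (card {i \<in> C j. lab r i = t}) / real (card (C j))"
proof -
  have "(\<Sum>i\<in>C j. if lab r i = t then 1 else 0) = (\<Sum>i\<in>C j. of_bool (lab r i = t) :: real)"
    by (simp add: of_bool_def)
  also have "\<dots> = real (card {i \<in> C j. lab r i = t})"
    using assms by (simp add: Collect_conj_eq)
  finally show ?thesis
    unfolding freq_def by simp
qed

lemma freq_nonneg: "freq C lab j r t \<ge> 0"
  unfolding freq_def by (simp add: sum_nonneg)

lemma max_other_nonneg: "max_other K C lab j r t \<ge> 0"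
proof (cases "{1..K} - {j} = {}")
  case False
  then obtain k where k: "k \<in> {1..K} - {j}"
    by blast
  have "0 \<le> freq C lab k r t"
    by (rule freq_nonneg)
  also have "\<dots> \<le> Max ((\<lambda>k. freq C lab k r t) ` ({1..K} - {j}))"
    using k by (intro Max_ge) auto
  finally show ?thesis
    using False unfolding max_other_def by simp
qed (simp add: max_other_def)

lemma DFI_eq_0_if_freq_eq_0: "freq C lab j r t = 0 \<Longrightarrow> DFI K C lab j r t = 0"
  using max_other_nonneg[of K C lab j r t] unfolding DFI_def by simp

lemma freq_ge_eps_if_label_occurs:
  assumes "finite (C j)" and "i \<in> C j" and "lab r i = t"
    and "eps \<le> 1 / real (card (C j))"
  shows "eps \<le> freq C lab j r t"
proof -
  have "{i \<in> C j. lab r i = t} \<noteq> {}"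
    using assms(2,3) by blast
  then have "1 \<le> real (card {i \<in> C j. lab r i = t})"
    using assms(1) by (simp add: Suc_le_eq card_gt_0_iff)
  then have "1 / real (card (C j)) \<le> freq C lab j r t"
    using assms(1) by (simp add: freq_eq_card divide_right_mono)
  with assms(4) show ?thesis
    by linarith
qed

lemma sum_inst_credit_label:
  assumes fin: "finite (C j)" and eps_le: "eps \<le> 1 / real (card (C j))"
  shows "(\<Sum>i\<in>{i \<in> C j. lab r i = t}. inst_credit eps K C lab j i r)
    = real (card (C j)) * DFI K C lab j r t"
proof (cases "{i \<in> C j. lab r i = t} = {}")
  case True
  then have "freq C lab j r t = 0"
    using fin by (simp add: freq_eq_card)
  then show ?thesis
    unfolding True by (simp add: DFI_eq_0_if_freq_eq_0)
next
  case False
  then obtain i where "i \<in> C j" "lab r i = t"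
    by blast
  then have eps_le_freq: "eps \<le> freq C lab j r t"
    using freq_ge_eps_if_label_occurs fin eps_le by blast
  define m where "m = card {i \<in> C j. lab r i = t}"
  have "m > 0"
    using False fin unfolding m_def by (simp add: card_gt_0_iff)
  moreover have "card (C j) > 0"
    using \<open>i \<in> C j\<close> fin card_gt_0_iff by blast
  ultimately have "real m / freq C lab j r t = real (card (C j))"
    using fin by (simp add: freq_eq_card flip: m_def)
  moreover have "(\<Sum>i\<in>{i \<in> C j. lab r i = t}. inst_credit eps K C lab j i r)
      = real m * (DFI K C lab j r t / freq C lab j r t)"
    using eps_le_freq by (simp add: inst_credit_def max_def m_def)
  ultimately show ?thesis
    by (metis times_divide_eq_left times_divide_eq_right)
qed

lemma sum_inst_credit:
  assumes fin: "finite (C j)" and lab_range: "\<forall>i\<in>C j. lab r i < k0"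
    and eps_le: "eps \<le> 1 / real (card (C j))"
  shows "(\<Sum>i\<in>C j. inst_credit eps K C lab j i r) = real (card (C j)) * round_credit k0 K C lab j r"
proof -
  have "(\<Sum>i\<in>C j. inst_credit eps K C lab j i r)
      = (\<Sum>t<k0. \<Sum>i\<in>{i \<in> C j. lab r i = t}. inst_credit eps K C lab j i r)"
    by (rule sum.group[symmetric]) (use fin lab_range in auto)
  also have "\<dots> = (\<Sum>t<k0. real (card (C j)) * DFI K C lab j r t)"
    by (rule sum.cong[OF refl]) (rule sum_inst_credit_label[where C = C and j = j, OF fin eps_le])
  finally show ?thesis
    by (simp add: round_credit_def sum_distrib_left)
qed

lemma sum_w_raw:
  assumes fin: "finite (C j)" and lab_range: "\<forall>r\<in>{1..R}. \<forall>i\<in>C j. lab r i < k0"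
    and eps_le: "eps \<le> 1 / real (card (C j))"
  shows "(\<Sum>i\<in>C j. w_raw eps R K C lab w j i f)
    = real (card (C j)) * (\<Sum>r=1..R. round_credit k0 K C lab j r * w r f)"
proof -
  have "(\<Sum>i\<in>C j. w_raw eps R K C lab w j i f)
      = (\<Sum>r=1..R. (\<Sum>i\<in>C j. inst_credit eps K C lab j i r) * w r f)"
    unfolding w_raw_def by (simp add: sum.swap[of _ "C j"] sum_distrib_right)
  also have "\<dots> = (\<Sum>r=1..R. real (card (C j)) * (round_credit k0 K C lab j r * w r f))"
  proof (rule sum.cong[OF refl])
    fix r assume "r \<in> {1..R}"
    then have lab_range_r: "\<forall>i\<in>C j. lab r i < k0"
      using lab_range by blast
    show "(\<Sum>i\<in>C j. inst_credit eps K C lab j i r) * w r f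
        = real (card (C j)) * (round_credit k0 K C lab j r * w r f)"
      using sum_inst_credit[of C j lab r k0 eps K, OF fin lab_range_r eps_le] by simp
  qed
  finally show ?thesis
    by (simp add: sum_distrib_left)
qed

theorem lemma3p6:
  fixes n R k0 K d :: nat
    and lab :: "nat \<Rightarrow> nat \<Rightarrow> nat"
    and w :: "nat \<Rightarrow> nat \<Rightarrow> real"
    and C :: "nat \<Rightarrow> nat set"
    and eps :: real
  assumes pos: "n > 0" "R > 0" "k0 > 0" "K > 0" "d > 0"
    and lab_range: "\<forall>r\<in>{1..R}. \<forall>i\<in>{1..n}. lab r i < k0"
    and w_nonneg: "\<forall>r\<in>{1..R}. \<forall>f\<in>{1..d}. w r f \<ge> 0"
    and w_norm: "\<forall>r\<in>{1..R}. (\<Sum>f=1..d. w r f) = 1"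
    and C_nonempty: "\<forall>j\<in>{1..K}. C j \<noteq> {}"
    and C_sub: "\<forall>j\<in>{1..K}. C j \<subseteq> {1..n}"
    and C_disj: "\<forall>j\<in>{1..K}. \<forall>k\<in>{1..K}. j \<noteq> k \<longrightarrow> C j \<inter> C k = {}"
    and C_cover: "(\<Union>j\<in>{1..K}. C j) = {1..n}"
    and eps_pos: "eps > 0"
    and eps_le: "\<forall>j\<in>{1..K}. eps \<le> 1 / real (card (C j))"
  shows "\<forall>j\<in>{1..K}.
     (\<forall>f\<in>{1..d}.
        (\<Sum>i\<in>C j. w_raw eps R K C lab w j i f) / real (card (C j))
        = (\<Sum>r=1..R. round_credit k0 K C lab j r * w r f))
   \<and> ((\<exists>f\<in>{1..d}. (\<Sum>r=1..R. round_credit k0 K C lab j r * w r f) \<noteq> 0) \<longrightarrow>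
        (\<forall>f\<in>{1..d}.
          L1 d (\<lambda>f'. (\<Sum>i\<in>C j. w_raw eps R K C lab w j i f') / real (card (C j))) f
          = W_cluster d R k0 K C lab w j f))"
proof -
  have average_eq: "(\<Sum>i\<in>C j. w_raw eps R K C lab w j i f) / real (card (C j))
      = (\<Sum>r=1..R. round_credit k0 K C lab j r * w r f)" if j: "j \<in> {1..K}" for j f
  proof -
    have fin: "finite (C j)"
      using C_sub j finite_subset by blast
    have "card (C j) > 0"
      using C_nonempty j fin by (simp add: card_gt_0_iff)
    moreover have lab_range_j: "\<forall>r\<in>{1..R}. \<forall>i\<in>C j. lab r i < k0"
      using lab_range C_sub j by blast
    ultimately show ?thesis
      using sum_w_raw[of C j R lab k0 eps K w f, OF fin lab_range_j eps_le[rule_format, OF j]]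
      by simp
  qed
  then show ?thesis
    by (simp add: W_cluster_def)
qed

end
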